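(* Let $\alpha\ge 2$ and $\lambda>0$. There exists $u_0>0$ such that for every $u\ge u_0$ the self-adjoint operator $H_u-\lambda u^{-1-\alpha/2}$ on $L^2(\mathbb{R},dv)$ has at most one negative eigenvalue (counted with multiplicity), where $$H_u:=-\partial_v^2+\frac{v^2}{2(u^2+v^2)^{1/2}}-\frac{1}{\sqrt2\,(u^2+v^2)^{1/4}}.$$
   Context: $H_u$ is defined as a self-adjoint operator on $L^2(\mathbb{R})$ via the closure of its quadratic form on $C_0^\infty(\mathbb{R})$ (the potential is bounded below). *)

theory Defs
  imports "HOL-Analysis.Analysis"
begin

definition smooth_cs :: "(real \<Rightarrow> real) \<Rightarrow> bool" where
  "smooth_cs \<phi> \<longleftrightarrow> (\<forall>k. \<forall>x. ((deriv ^^ k) \<phi>) differentiable (at x))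
                    \<and> (\<exists>R. \<forall>x. \<bar>x\<bar> > R \<longrightarrow> \<phi> x = 0)"

(* Square integrable (Borel) functions, i.e. representatives of L^2(R, dv). *)
definition L2 :: "(real \<Rightarrow> real) \<Rightarrow> bool" where
  "L2 f \<longleftrightarrow> f \<in> borel_measurable lborel \<and> integrable lborel (\<lambda>x. (f x)\<^sup>2)"

(* Quadratic (sesquilinear) form of -d^2/dv^2 + W on C_0^\<infinity>. *)
definition sch_form :: "(real \<Rightarrow> real) \<Rightarrow> (real \<Rightarrow> real) \<Rightarrow> (real \<Rightarrow> real) \<Rightarrow> real" where
  "sch_form W \<phi> \<psi> = (\<integral>x. deriv \<phi> x * deriv \<psi> x + W x * \<phi> x * \<psi> x \<partial>lborel)"

(* \<phi> is an approximating sequence of f for the closure of the form: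
   \<phi> n \<in> C_0^\<infinity>, \<phi> n \<rightarrow> f in L^2, and (\<phi> n) is Cauchy in the form norm. *)
definition form_approx :: "(real \<Rightarrow> real) \<Rightarrow> (real \<Rightarrow> real) \<Rightarrow> (nat \<Rightarrow> real \<Rightarrow> real) \<Rightarrow> bool" where
  "form_approx W f \<phi> \<longleftrightarrow> L2 f \<and> (\<forall>n. smooth_cs (\<phi> n))
     \<and> (\<lambda>n. \<integral>x. (\<phi> n x - f x)\<^sup>2 \<partial>lborel) \<longlonglongrightarrow> 0
     \<and> (\<forall>e>0. \<exists>N. \<forall>n\<ge>N. \<forall>m\<ge>N.
           \<bar>sch_form W (\<lambda>x. \<phi> n x - \<phi> m x) (\<lambda>x. \<phi> n x - \<phi> m x)\<bar> < e)"

definition form_dom :: "(real \<Rightarrow> real) \<Rightarrow> (real \<Rightarrow> real) \<Rightarrow> bool" where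
  "form_dom W f \<longleftrightarrow> (\<exists>\<phi>. form_approx W f \<phi>)"

(* E is an eigenvalue of the self-adjoint operator associated with the closed form,
   with eigenfunction f: f \<in> D(q), f \<noteq> 0 in L^2, and q(f,g) = E <f,g> for all g \<in> D(q),
   where the closed form is q(f,g) = lim q(\<phi> n, \<psi> n) along approximating sequences. *)
definition is_eigen :: "(real \<Rightarrow> real) \<Rightarrow> real \<Rightarrow> (real \<Rightarrow> real) \<Rightarrow> bool" where
  "is_eigen W E f \<longleftrightarrow> form_dom W f \<and> \<not> (AE x in lborel. f x = 0)
     \<and> (\<forall>g \<phi> \<psi>. form_approx W f \<phi> \<longrightarrow> form_approx W g \<psi> \<longrightarrow>
           (\<lambda>n. sch_form W (\<phi> n) (\<psi> n)) \<longlonglongrightarrow> E * (\<integral>x. f x * g x \<partial>lborel))"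

(* At most one negative eigenvalue counted with multiplicity: the span of all
   eigenfunctions with negative eigenvalues has dimension \<le> 1, i.e. any two such
   eigenfunctions are proportional in L^2. *)
definition at_most_one_neg_eig :: "(real \<Rightarrow> real) \<Rightarrow> bool" where
  "at_most_one_neg_eig W \<longleftrightarrow>
     (\<forall>E1 E2 f1 f2. is_eigen W E1 f1 \<and> E1 < 0 \<and> is_eigen W E2 f2 \<and> E2 < 0 \<longrightarrow>
        (\<exists>c. AE x in lborel. f2 x = c * f1 x))"

definition Vpot :: "real \<Rightarrow> real \<Rightarrow> real" where
  "Vpot u v = v\<^sup>2 / (2 * sqrt (u\<^sup>2 + v\<^sup>2)) - 1 / (sqrt 2 * (u\<^sup>2 + v\<^sup>2) powr (1/4))"

end

theory Submission
  imports Defs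
begin

(*
  The shifted potential W = Vpot u - lam u^(-1-alpha/2) is bounded below by -a
  and is non-negative outside [-R, R], where a R^2 <= 2 for u large.  A one-dimensional
  Hardy-type estimate then shows that the form q(phi) = int phi'^2 + W phi^2 is
  non-negative on the codimension-one subspace {phi(0) = 0} of test functions: if
  phi(0) = 0 then phi(t)^2 <= |t| int phi'^2, so the negative part of W costs at most
  (a R^2 / 2) int phi'^2.  On the other hand, two non-proportional eigenfunctions with
  negative eigenvalues make the Gram matrix of q on their approximating test functions
  eventually negative definite, and a negative definite form on a two-dimensional space
  cannot be non-negative on a hyperplane.
*)

section \<open>A Hardy-type positivity estimate\<close>

lemma integral_square_le:
  fixes g :: "real \<Rightarrow> real"
  assumes x0: "0 \<le> x" and cg: "continuous_on {0..x} g"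
  shows "(integral {0..x} g)^2 \<le> x * integral {0..x} (\<lambda>t. (g t)^2)"
proof (cases "x = 0")
  case True then show ?thesis by simp
next
  case False
  hence x: "x > 0" using x0 by simp
  define I where "I = integral {0..x} g"
  define J where "J = integral {0..x} (\<lambda>t. (g t)^2)"
  define m where "m = I / x"
  have hI: "(g has_integral I) {0..x}" unfolding I_def
    using integrable_continuous_interval[OF cg] by (simp add: integrable_integral)
  have hJ: "((\<lambda>t. (g t)^2) has_integral J) {0..x}" unfolding J_def
    by (intro integrable_integral integrable_continuous_interval continuous_intros cg)
  have expand: "((\<lambda>t. (g t)^2 - (2*m) * g t + m^2) has_integral (J - (2*m)*I + x * m^2)) {0..x}"
    using has_integral_add[OF has_integral_diff[OF hJ has_integral_mult_right[OF hI, of "2*m"]]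
        has_integral_const_real[of "m^2" 0 x]] x by simp
  have square: "(\<lambda>t. (g t)^2 - (2*m) * g t + m^2) = (\<lambda>t. (g t - m)^2)"
    by (auto simp: power2_eq_square algebra_simps)
  have "0 \<le> J - (2*m)*I + x * m^2"
    using has_integral_nonneg[OF expand[unfolded square]] by simp
  hence "0 \<le> J - I^2 / x" unfolding m_def using x by (simp add: power2_eq_square field_simps)
  thus ?thesis unfolding I_def J_def using x by (simp add: field_simps)
qed

lemma square_le_dirichlet:
  fixes f df :: "real \<Rightarrow> real"
  assumes x0: "0 \<le> x" and xT: "x \<le> T" and f0: "f 0 = 0"
   and der: "\<And>t. t \<in> {0..T} \<Longrightarrow> (f has_real_derivative df t) (at t)"
   and cdf: "continuous_on {0..T} df"
  shows "(f x)^2 \<le> x * integral {0..T} (\<lambda>t. (df t)^2)"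
proof -
  have "(df has_integral (f x - f 0)) {0..x}"
  proof (rule fundamental_theorem_of_calculus[OF x0])
    fix t assume "t \<in> {0..x}"
    hence "(f has_real_derivative df t) (at t)" using der xT by auto
    thus "(f has_vector_derivative df t) (at t within {0..x})"
      unfolding has_real_derivative_iff_has_vector_derivative
      by (rule has_vector_derivative_at_within)
  qed
  hence fx: "f x = integral {0..x} df" using f0 by (simp add: integral_unique)
  have cdx: "continuous_on {0..x} df" using cdf by (rule continuous_on_subset) (use xT in auto)
  have "(f x)^2 \<le> x * integral {0..x} (\<lambda>t. (df t)^2)" unfolding fx
    by (rule integral_square_le[OF x0 cdx])
  also have "integral {0..x} (\<lambda>t. (df t)^2) \<le> integral {0..T} (\<lambda>t. (df t)^2)"
    using xT by (intro integral_subset_le integrable_continuous_interval continuous_intros cdx cdf) auto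
  hence "x * integral {0..x} (\<lambda>t. (df t)^2) \<le> x * integral {0..T} (\<lambda>t. (df t)^2)"
    using x0 by (rule mult_left_mono)
  finally show ?thesis .
qed

text \<open>Positivity on a half line: if w >= -a on [0, R], w >= 0 on [R, T], a R^2 <= 2 and
  f(0) = 0, then int_0^T f'^2 + w f^2 >= 0.  The negative part contributes at least
  -a int_0^R t dt * int f'^2 = -(a R^2 / 2) int f'^2.\<close>
lemma half_line_form_nonneg:
  fixes f df w :: "real \<Rightarrow> real"
  assumes R0: "0 \<le> R" and RT: "R \<le> T" and f0: "f 0 = 0"
   and der: "\<And>t. t \<in> {0..T} \<Longrightarrow> (f has_real_derivative df t) (at t)"
   and cdf: "continuous_on {0..T} df"
   and cw: "continuous_on {0..T} w"
   and wa: "\<And>t. t \<in> {0..T} \<Longrightarrow> -a \<le> w t"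
   and wpos: "\<And>t. t \<in> {0..T} \<Longrightarrow> R \<le> t \<Longrightarrow> 0 \<le> w t"
   and a0: "0 \<le> a" and aR: "a * R^2 \<le> 2"
  shows "0 \<le> integral {0..T} (\<lambda>t. (df t)^2 + w t * (f t)^2)"
proof -
  have cf: "continuous_on {0..T} f"
    by (rule continuous_at_imp_continuous_on) (use der DERIV_isCont in blast)
  define D where "D = integral {0..T} (\<lambda>t. (df t)^2)"
  define P where "P = (\<lambda>t. w t * (f t)^2)"
  have i1: "(\<lambda>t. (df t)^2) integrable_on {0..T}"
    by (intro integrable_continuous_interval continuous_intros cdf)
  have i2: "P integrable_on {0..T}" unfolding P_def
    by (intro integrable_continuous_interval continuous_intros cf cw)
  have D0: "0 \<le> D" unfolding D_def by (rule integral_nonneg[OF i1]) auto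
  have near: "-a * D * (R^2 / 2) \<le> integral {0..R} P"
  proof (rule has_integral_le)
    show "((\<lambda>t. -a * D * t) has_integral (-a * D * (R^2 / 2))) {0..R}"
      using has_integral_mult_right[OF ident_has_integral[OF R0], of "-a*D"] by simp
    show "(P has_integral integral {0..R} P) {0..R}"
      using i2 RT by (intro integrable_integral integrable_subinterval_real[OF i2]) auto
  next
    fix t assume t: "t \<in> {0..R}"
    hence tT: "t \<in> {0..T}" using RT by auto
    have "(f t)^2 \<le> t * D" unfolding D_def
      by (rule square_le_dirichlet[OF _ _ f0 der cdf]) (use t RT in auto)
    hence "a * (f t)^2 \<le> a * (t * D)" using a0 by (rule mult_left_mono)
    hence "-a * D * t \<le> -a * (f t)^2" by (simp add: algebra_simps)
    also have "\<dots> \<le> P t" unfolding P_def using wa[OF tT] by (intro mult_right_mono) auto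
    finally show "-a * D * t \<le> P t" .
  qed
  have far: "0 \<le> integral {R..T} P"
    using wpos R0 by (intro integral_nonneg integrable_subinterval_real[OF i2]) (auto simp: P_def)
  have "integral {0..T} (\<lambda>t. (df t)^2 + w t * (f t)^2) = D + integral {0..R} P + integral {R..T} P"
    using integral_add[OF i1 i2] Henstock_Kurzweil_Integration.integral_combine[OF R0 RT i2]
    unfolding D_def P_def by simp
  moreover have "a * R^2 * D \<le> 2 * D" using aR D0 by (rule mult_right_mono)
  ultimately show ?thesis using near far by (simp add: algebra_simps)
qed

lemma integrable_compact_support:
  fixes g :: "real \<Rightarrow> real"
  assumes cg: "continuous_on UNIV g" and z: "\<And>x. B < \<bar>x\<bar> \<Longrightarrow> g x = 0"
  shows "integrable lborel g"
proof -
  have "g = (\<lambda>t. indicator {-B..B} t *\<^sub>R g t)"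
    using z by (force simp: fun_eq_iff indicator_def abs_le_iff not_less)
  thus ?thesis
    by (metis borel_integrable_compact compact_Icc continuous_on_subset[OF cg] subset_UNIV)
qed

text \<open>Positivity on the whole line, for compactly supported C^1 functions vanishing at 0,
  obtained by applying the half-line estimate to f and to its reflection.\<close>
lemma line_form_nonneg:
  fixes f df W :: "real \<Rightarrow> real"
  assumes der: "\<And>t. (f has_real_derivative df t) (at t)"
   and cdf: "continuous_on UNIV df"
   and cW: "continuous_on UNIV W"
   and supp: "\<And>t. B < \<bar>t\<bar> \<Longrightarrow> f t = 0 \<and> df t = 0"
   and f0: "f 0 = 0"
   and Wa: "\<And>t. -a \<le> W t"
   and Wpos: "\<And>t. R \<le> \<bar>t\<bar> \<Longrightarrow> 0 \<le> W t"
   and R0: "0 \<le> R" and a0: "0 \<le> a" and aR: "a * R^2 \<le> 2"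
  shows "0 \<le> (\<integral>t. (df t)^2 + W t * (f t)^2 \<partial>lborel)"
proof -
  define T where "T = max R B + 1"
  have RT: "R \<le> T" unfolding T_def by simp
  have T0: "0 \<le> T" using R0 RT by simp
  define P where "P = (\<lambda>t. (df t)^2 + W t * (f t)^2)"
  have cf: "continuous_on UNIV f"
    by (rule continuous_at_imp_continuous_on) (use der DERIV_isCont in blast)
  have cP: "continuous_on UNIV P" unfolding P_def
    by (intro continuous_intros cf cdf cW)
  have P_supp: "P t = 0" if "T < \<bar>t\<bar>" for t
    using that supp[of t] unfolding P_def T_def by auto
  hence Pz: "P t = 0" if "t \<notin> {-T..T}" for t
    using that by auto
  have intP: "integrable lborel P"
    by (rule integrable_compact_support[OF cP P_supp])
  have "(\<integral>t. P t \<partial>lborel) = integral UNIV P"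
    using integral_lborel[OF intP] by simp
  also have "\<dots> = integral UNIV (\<lambda>t. if t \<in> {-T..T} then P t else 0)"
    by (rule arg_cong[where f="integral UNIV"]) (use Pz in auto)
  also have "\<dots> = integral {-T..T} P" by (rule integral_restrict_UNIV)
  also have "\<dots> = integral {-T..0} P + integral {0..T} P"
    by (rule Henstock_Kurzweil_Integration.integral_combine[symmetric])
       (use T0 in \<open>auto intro!: integrable_continuous_interval continuous_on_subset[OF cP]\<close>)
  also have "integral {-T..0} P = integral {0..T} (\<lambda>t. P (-t))"
    using Henstock_Kurzweil_Integration.integral_reflect_real[of T 0 "\<lambda>t. P (-t)"] by simp
  finally have split: "(\<integral>t. P t \<partial>lborel) = integral {0..T} (\<lambda>t. P (-t)) + integral {0..T} P" .
  have right: "0 \<le> integral {0..T} P" unfolding P_def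
    by (rule half_line_form_nonneg[OF R0 RT, where f=f, OF f0])
       (use der Wa Wpos a0 aR in \<open>auto intro: continuous_on_subset[OF cdf] continuous_on_subset[OF cW]\<close>)
  have left: "0 \<le> integral {0..T} (\<lambda>t. (- df (-t))^2 + W (-t) * (f (-t))^2)"
  proof (rule half_line_form_nonneg[OF R0 RT, where f="\<lambda>t. f (-t)"])
    show "continuous_on {0..T} (\<lambda>t. - df (- t))"
      by (intro continuous_intros continuous_on_compose2[OF cdf]) auto
    show "continuous_on {0..T} (\<lambda>t. W (- t))"
      by (intro continuous_intros continuous_on_compose2[OF cW]) auto
    fix t
    show "((\<lambda>t. f (- t)) has_real_derivative - df (- t)) (at t)"
      using der[of "-t"] DERIV_mirror by blast
  qed (use f0 Wa Wpos a0 aR in auto)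
  show ?thesis using split right left unfolding P_def by simp
qed

lemma smooth_cs_C1:
  assumes "smooth_cs \<phi>"
  shows "\<And>x. (\<phi> has_real_derivative deriv \<phi> x) (at x)"
    and "continuous_on UNIV (deriv \<phi>)"
    and "\<exists>B. \<forall>x. B < \<bar>x\<bar> \<longrightarrow> \<phi> x = 0 \<and> deriv \<phi> x = 0"
proof -
  have d0: "\<And>x. \<phi> differentiable (at x)"
    using assms unfolding smooth_cs_def by (metis funpow_0)
  have d1: "\<And>x. (deriv \<phi>) differentiable (at x)"
    using assms unfolding smooth_cs_def by (metis One_nat_def funpow.simps(2) funpow_0 o_apply)
  show der: "\<And>x. (\<phi> has_real_derivative deriv \<phi> x) (at x)"
    using d0 DERIV_deriv_iff_real_differentiable by blast
  show "continuous_on UNIV (deriv \<phi>)"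
    by (rule continuous_at_imp_continuous_on) (use d1 differentiable_imp_continuous_within in blast)
  obtain B where B: "\<And>x. B < \<bar>x\<bar> \<Longrightarrow> \<phi> x = 0"
    using assms unfolding smooth_cs_def by blast
  have "deriv \<phi> x = 0" if x: "B < \<bar>x\<bar>" for x
  proof -
    have "open {y::real. B < \<bar>y\<bar>}"
      by (rule open_Collect_less) (intro continuous_intros)+
    hence "((\<lambda>_. 0::real) has_real_derivative deriv \<phi> x) (at x)"
      using x B by (intro has_field_derivative_transform_within_open[OF der]) auto
    thus ?thesis using DERIV_unique DERIV_const by blast
  qed
  thus "\<exists>B. \<forall>x. B < \<bar>x\<bar> \<longrightarrow> \<phi> x = 0 \<and> deriv \<phi> x = 0" using B by blast
qed

lemma sch_form_combination:
  assumes cW: "continuous_on UNIV W" and sp: "smooth_cs \<phi>" and sq: "smooth_cs \<psi>"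
  shows "(\<integral>t. (c1 * deriv \<phi> t + c2 * deriv \<psi> t)^2 + W t * (c1 * \<phi> t + c2 * \<psi> t)^2 \<partial>lborel)
    = c1^2 * sch_form W \<phi> \<phi> + 2 * c1 * c2 * sch_form W \<phi> \<psi> + c2^2 * sch_form W \<psi> \<psi>"
proof -
  note p = smooth_cs_C1[OF sp] and q = smooth_cs_C1[OF sq]
  obtain B1 where B1: "\<And>x. B1 < \<bar>x\<bar> \<Longrightarrow> \<phi> x = 0 \<and> deriv \<phi> x = 0" using p(3) by blast
  obtain B2 where B2: "\<And>x. B2 < \<bar>x\<bar> \<Longrightarrow> \<psi> x = 0 \<and> deriv \<psi> x = 0" using q(3) by blast
  have cp: "continuous_on UNIV \<phi>" and cq: "continuous_on UNIV \<psi>"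
    using p(1) q(1) DERIV_isCont by (blast intro: continuous_at_imp_continuous_on)+
  define F where "F = (\<lambda>f g t. deriv f t * deriv g t + W t * f t * g t)"
  have iF: "integrable lborel (F f g)" if "f = \<phi> \<or> f = \<psi>" "g = \<phi> \<or> g = \<psi>" for f g
  proof (rule integrable_compact_support[where B="max B1 B2"])
    show "continuous_on UNIV (F f g)" unfolding F_def using that
      by (auto intro!: continuous_intros p(2) q(2) cp cq cW)
    fix x assume "max B1 B2 < \<bar>x\<bar>" thus "F f g x = 0" unfolding F_def using that B1 B2 by auto
  qed
  have "(\<lambda>t. (c1 * deriv \<phi> t + c2 * deriv \<psi> t)^2 + W t * (c1 * \<phi> t + c2 * \<psi> t)^2)
     = (\<lambda>t. c1^2 * F \<phi> \<phi> t + 2 * c1 * c2 * F \<phi> \<psi> t + c2^2 * F \<psi> \<psi> t)"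
    unfolding F_def by (auto simp: fun_eq_iff power2_eq_square algebra_simps)
  moreover have "sch_form W f g = integral\<^sup>L lborel (F f g)" for f g
    unfolding sch_form_def F_def by simp
  ultimately show ?thesis using iF by simp
qed

lemma form_nonneg_on_point_kernel:
  fixes W :: "real \<Rightarrow> real"
  assumes cW: "continuous_on UNIV W"
   and Wa: "\<And>t. -a \<le> W t"
   and Wpos: "\<And>t. R \<le> \<bar>t\<bar> \<Longrightarrow> 0 \<le> W t"
   and R0: "0 \<le> R" and a0: "0 \<le> a" and aR: "a * R^2 \<le> 2"
   and sp: "smooth_cs \<phi>" and sq: "smooth_cs \<psi>"
   and c0: "c1 * \<phi> 0 + c2 * \<psi> 0 = 0"
  shows "0 \<le> c1^2 * sch_form W \<phi> \<phi> + 2 * c1 * c2 * sch_form W \<phi> \<psi> + c2^2 * sch_form W \<psi> \<psi>"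
proof -
  note p = smooth_cs_C1[OF sp] and q = smooth_cs_C1[OF sq]
  obtain B1 where B1: "\<And>x. B1 < \<bar>x\<bar> \<Longrightarrow> \<phi> x = 0 \<and> deriv \<phi> x = 0" using p(3) by blast
  obtain B2 where B2: "\<And>x. B2 < \<bar>x\<bar> \<Longrightarrow> \<psi> x = 0 \<and> deriv \<psi> x = 0" using q(3) by blast
  have "0 \<le> (\<integral>t. (c1 * deriv \<phi> t + c2 * deriv \<psi> t)^2 + W t * (c1 * \<phi> t + c2 * \<psi> t)^2 \<partial>lborel)"
  proof (rule line_form_nonneg[where B="max B1 B2" and R=R and a=a])
    show "((\<lambda>x. c1 * \<phi> x + c2 * \<psi> x) has_real_derivative c1 * deriv \<phi> t + c2 * deriv \<psi> t) (at t)" for t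
      by (intro DERIV_add DERIV_cmult p(1) q(1))
    show "continuous_on UNIV (\<lambda>t. c1 * deriv \<phi> t + c2 * deriv \<psi> t)"
      by (intro continuous_intros p(2) q(2))
  qed (use cW B1 B2 c0 Wa Wpos R0 a0 aR in auto)
  thus ?thesis using sch_form_combination[OF cW sp sq] by simp
qed

section \<open>Linear algebra of 2x2 forms and Gram matrices\<close>

lemma neg_def_form_not_nonneg_on_line:
  fixes a b c p q :: real
  assumes a: "a < 0" and det: "0 < a * c - b^2"
   and nonneg: "\<And>c1 c2. c1 * p + c2 * q = 0 \<Longrightarrow> 0 \<le> c1^2 * a + 2 * c1 * c2 * b + c2^2 * c"
  shows False
proof -
  have neg: "c1^2 * a + 2 * c1 * c2 * b + c2^2 * c < 0" if "c1 \<noteq> 0 \<or> c2 \<noteq> 0" for c1 c2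
  proof -
    have id: "a * (c1^2 * a + 2 * c1 * c2 * b + c2^2 * c) = (a * c1 + b * c2)^2 + (a * c - b^2) * c2^2"
      by (simp add: power2_eq_square algebra_simps)
    have "0 < (a * c1 + b * c2)^2 + (a * c - b^2) * c2^2"
    proof (cases "c2 = 0")
      case True then show ?thesis using that a by simp
    next
      case False then show ?thesis using det by (simp add: add_nonneg_pos)
    qed
    thus ?thesis unfolding id[symmetric] using a by (simp add: zero_less_mult_iff)
  qed
  show False
  proof (cases "p = 0 \<and> q = 0")
    case True then show False using nonneg[of 1 0] neg[of 1 0] by simp
  next
    case False
    have "0 \<le> q^2 * a + 2 * q * (-p) * b + (-p)^2 * c" by (rule nonneg) (simp add: algebra_simps)
    moreover have "q^2 * a + 2 * q * (-p) * b + (-p)^2 * c < 0" by (rule neg) (use False in auto)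
    ultimately show False by linarith
  qed
qed

lemma L2_integrable_product:
  assumes "L2 f" "L2 g"
  shows "integrable lborel (\<lambda>x. f x * g x)"
proof (rule Bochner_Integration.integrable_bound)
  show "integrable lborel (\<lambda>x. (f x)^2 + (g x)^2)"
    using assms unfolding L2_def by auto
  show "(\<lambda>x. f x * g x) \<in> borel_measurable lborel"
    using assms unfolding L2_def by auto
  show "AE x in lborel. norm (f x * g x) \<le> norm ((f x)^2 + (g x)^2)"
  proof (rule AE_I2)
    fix x
    have "0 \<le> (\<bar>f x\<bar> - \<bar>g x\<bar>)^2" by simp
    hence "2 * \<bar>f x\<bar> * \<bar>g x\<bar> \<le> (f x)^2 + (g x)^2"
      by (simp add: power2_eq_square algebra_simps)
    hence "\<bar>f x\<bar> * \<bar>g x\<bar> \<le> (f x)^2 + (g x)^2"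
      using zero_le_mult_iff[of "\<bar>f x\<bar>" "\<bar>g x\<bar>"] by linarith
    thus "norm (f x * g x) \<le> norm ((f x)^2 + (g x)^2)" by (simp add: abs_mult)
  qed
qed

text \<open>Gram inequality: two non-proportional L^2 functions (the first nonzero) have a
  positive definite Gram matrix.  The witness is the square norm of G12 f1 - G11 f2.\<close>
lemma gram_positive_definite:
  assumes L1: "L2 f1" and L2: "L2 f2"
   and nz: "\<not> (AE x in lborel. f1 x = 0)"
   and np: "\<not> (\<exists>c. AE x in lborel. f2 x = c * f1 x)"
  defines "G11 \<equiv> \<integral>x. f1 x * f1 x \<partial>lborel"
   and "G12 \<equiv> \<integral>x. f1 x * f2 x \<partial>lborel"
   and "G22 \<equiv> \<integral>x. f2 x * f2 x \<partial>lborel"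
  shows "0 < G11" and "0 < G11 * G22 - G12^2"
proof -
  have i11: "integrable lborel (\<lambda>x. f1 x * f1 x)" by (rule L2_integrable_product[OF L1 L1])
  have i12: "integrable lborel (\<lambda>x. f1 x * f2 x)" by (rule L2_integrable_product[OF L1 L2])
  have i22: "integrable lborel (\<lambda>x. f2 x * f2 x)" by (rule L2_integrable_product[OF L2 L2])
  text \<open>A non-negative integrable function with vanishing integral vanishes a.e.\<close>
  have sq_int_pos: "0 < (\<integral>x. h x * h x \<partial>lborel)"
    if "integrable lborel (\<lambda>x. h x * h x)" "\<not> (AE x in lborel. h x = 0)" for h :: "real \<Rightarrow> real"
  proof -
    have "(\<integral>x. h x * h x \<partial>lborel) \<noteq> 0"
      using that integral_nonneg_eq_0_iff_AE[OF that(1)] by (auto elim: eventually_mono)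
    moreover have "0 \<le> (\<integral>x. h x * h x \<partial>lborel)" by (rule integral_nonneg_AE) auto
    ultimately show ?thesis by linarith
  qed
  show G11: "0 < G11" unfolding G11_def by (rule sq_int_pos[OF i11 nz])
  define g where "g = (\<lambda>x. G12 * f1 x - G11 * f2 x)"
  have g_sq: "(\<lambda>x. g x * g x) = (\<lambda>x. G12^2 * (f1 x * f1 x) - 2 * G12 * G11 * (f1 x * f2 x) + G11^2 * (f2 x * f2 x))"
    unfolding g_def by (auto simp: fun_eq_iff power2_eq_square algebra_simps)
  have ig: "integrable lborel (\<lambda>x. g x * g x)" unfolding g_sq by (simp add: i11 i12 i22)
  have "(\<integral>x. g x * g x \<partial>lborel) = G12^2 * G11 - 2 * G12 * G11 * G12 + G11^2 * G22"
    unfolding g_sq G11_def G12_def G22_def by (simp add: i11 i12 i22)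
  hence "(\<integral>x. g x * g x \<partial>lborel) = G11 * (G11 * G22 - G12^2)"
    by (simp add: power2_eq_square algebra_simps)
  moreover have "\<not> (AE x in lborel. g x = 0)"
  proof
    assume "AE x in lborel. g x = 0"
    hence "AE x in lborel. f2 x = (G12 / G11) * f1 x"
      by (rule eventually_mono) (use G11 in \<open>simp add: g_def field_simps\<close>)
    thus False using np by blast
  qed
  ultimately have "0 < G11 * (G11 * G22 - G12^2)" using sq_int_pos[OF ig] by simp
  thus "0 < G11 * G22 - G12^2" using G11 by (simp add: zero_less_mult_iff)
qed

text \<open>If G is a positive definite Gram matrix and E1, E2 < 0 are eigenvalues with
  E1 G12 = E2 G12 (orthogonality for distinct eigenvalues), then the form matrix
  (E1 G11, E1 G12; E1 G12, E2 G22) is negative definite.\<close>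
lemma eigen_form_matrix_neg_def:
  fixes E1 E2 G11 G12 G22 :: real
  assumes E1: "E1 < 0" and E2: "E2 < 0" and G11: "0 < G11" and detG: "0 < G11 * G22 - G12^2"
   and sym: "E1 * G12 = E2 * G12"
  shows "E1 * G11 < 0" and "0 < (E1 * G11) * (E2 * G22) - (E1 * G12)^2"
proof -
  show "E1 * G11 < 0" using E1 G11 by (simp add: mult_neg_pos)
  have G11G22: "0 < G11 * G22" using detG by (smt (verit) zero_le_power2)
  show "0 < (E1 * G11) * (E2 * G22) - (E1 * G12)^2"
  proof (cases "E1 = E2")
    case True
    have "(E1 * G11) * (E2 * G22) - (E1 * G12)^2 = E1^2 * (G11 * G22 - G12^2)"
      unfolding True by (simp add: power2_eq_square algebra_simps)
    thus ?thesis using detG E1 by simp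
  next
    case False
    hence "G12 = 0" using sym by simp
    hence "(E1 * G11) * (E2 * G22) - (E1 * G12)^2 = (E1 * E2) * (G11 * G22)" by simp
    moreover have "0 < (E1 * E2) * (G11 * G22)" by (rule mult_pos_pos[OF mult_neg_neg[OF E1 E2] G11G22])
    ultimately show ?thesis by linarith
  qed
qed

lemma is_eigen_limit:
  assumes "is_eigen W E f" "form_approx W f \<phi>" "form_approx W g \<psi>"
  shows "(\<lambda>n. sch_form W (\<phi> n) (\<psi> n)) \<longlonglongrightarrow> E * (\<integral>x. f x * g x \<partial>lborel)"
  using assms unfolding is_eigen_def by blast

lemma eigen_pair_eventually_neg_def:
  assumes e1: "is_eigen W E1 f1" and E1: "E1 < 0" and e2: "is_eigen W E2 f2" and E2: "E2 < 0"
   and np: "\<not> (\<exists>c. AE x in lborel. f2 x = c * f1 x)"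
   and ap: "form_approx W f1 \<phi>" and aq: "form_approx W f2 \<psi>"
  shows "\<exists>n. sch_form W (\<phi> n) (\<phi> n) < 0 \<and>
    0 < sch_form W (\<phi> n) (\<phi> n) * sch_form W (\<psi> n) (\<psi> n) - (sch_form W (\<phi> n) (\<psi> n))^2"
proof -
  define G11 G12 G22 where "G11 = (\<integral>x. f1 x * f1 x \<partial>lborel)"
    and "G12 = (\<integral>x. f1 x * f2 x \<partial>lborel)" and "G22 = (\<integral>x. f2 x * f2 x \<partial>lborel)"
  have L: "L2 f1" "L2 f2" using ap aq unfolding form_approx_def by auto
  have nz: "\<not> (AE x in lborel. f1 x = 0)" using e1 unfolding is_eigen_def by blast
  note G = gram_positive_definite[OF L nz np, folded G11_def G12_def G22_def]
  have A11: "(\<lambda>n. sch_form W (\<phi> n) (\<phi> n)) \<longlonglongrightarrow> E1 * G11"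
    unfolding G11_def by (rule is_eigen_limit[OF e1 ap ap])
  have A12: "(\<lambda>n. sch_form W (\<phi> n) (\<psi> n)) \<longlonglongrightarrow> E1 * G12"
    unfolding G12_def by (rule is_eigen_limit[OF e1 ap aq])
  have A22: "(\<lambda>n. sch_form W (\<psi> n) (\<psi> n)) \<longlonglongrightarrow> E2 * G22"
    unfolding G22_def by (rule is_eigen_limit[OF e2 aq aq])
  have "(\<lambda>n. sch_form W (\<phi> n) (\<psi> n)) \<longlonglongrightarrow> E2 * G12"
    using is_eigen_limit[OF e2 aq ap] unfolding G12_def sch_form_def by (simp add: mult_ac)
  hence sym: "E1 * G12 = E2 * G12" using LIMSEQ_unique[OF A12] by blast
  note M = eigen_form_matrix_neg_def[OF E1 E2 G sym]
  have "eventually (\<lambda>n. sch_form W (\<phi> n) (\<phi> n) < 0) sequentially"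
    by (rule order_tendstoD(2)[OF A11 M(1)])
  moreover have "eventually (\<lambda>n. 0 < sch_form W (\<phi> n) (\<phi> n) * sch_form W (\<psi> n) (\<psi> n)
      - (sch_form W (\<phi> n) (\<psi> n))^2) sequentially"
    by (rule order_tendstoD(1)[OF _ M(2)]) (intro tendsto_intros A11 A12 A22)
  ultimately show ?thesis
    using eventually_sequentially eventually_conj by (metis (no_types, lifting) order_refl)
qed

lemma at_most_one_neg_eig_criterion:
  fixes W :: "real \<Rightarrow> real"
  assumes cW: "continuous_on UNIV W"
   and Wa: "\<And>t. -a \<le> W t"
   and Wpos: "\<And>t. R \<le> \<bar>t\<bar> \<Longrightarrow> 0 \<le> W t"
   and R0: "0 \<le> R" and a0: "0 \<le> a" and aR: "a * R^2 \<le> 2"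
  shows "at_most_one_neg_eig W"
  unfolding at_most_one_neg_eig_def
proof (intro allI impI)
  fix E1 E2 f1 f2
  assume eig: "is_eigen W E1 f1 \<and> E1 < 0 \<and> is_eigen W E2 f2 \<and> E2 < 0"
  show "\<exists>c. AE x in lborel. f2 x = c * f1 x"
  proof (rule ccontr)
    assume np: "\<not> (\<exists>c. AE x in lborel. f2 x = c * f1 x)"
    obtain \<phi> \<psi> where ap: "form_approx W f1 \<phi>" and aq: "form_approx W f2 \<psi>"
      using eig unfolding is_eigen_def form_dom_def by blast
    obtain n where neg: "sch_form W (\<phi> n) (\<phi> n) < 0"
      "0 < sch_form W (\<phi> n) (\<phi> n) * sch_form W (\<psi> n) (\<psi> n) - (sch_form W (\<phi> n) (\<psi> n))^2"
      using eigen_pair_eventually_neg_def[OF _ _ _ _ np ap aq] eig by blast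
    have sp: "smooth_cs (\<phi> n)" and sq: "smooth_cs (\<psi> n)"
      using ap aq unfolding form_approx_def by auto
    have "0 \<le> c1^2 * sch_form W (\<phi> n) (\<phi> n) + 2 * c1 * c2 * sch_form W (\<phi> n) (\<psi> n)
        + c2^2 * sch_form W (\<psi> n) (\<psi> n)" if "c1 * \<phi> n 0 + c2 * \<psi> n 0 = 0" for c1 c2
      by (rule form_nonneg_on_point_kernel[OF cW Wa Wpos R0 a0 aR sp sq that])
    thus False by (rule neg_def_form_not_nonneg_on_line[OF neg])
  qed
qed

section \<open>Estimates on the potential\<close>

text \<open>(u^2 + v^2)^(1/4) >= sqrt u, hence Vpot u >= -1 / (sqrt 2 sqrt u).\<close>
lemma Vpot_attractive_part_le:
  assumes u0: "0 < u"
  shows "1 / (sqrt 2 * (u^2 + v^2) powr (1/4)) \<le> 1 / (sqrt 2 * sqrt u)"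
proof -
  have "(u^2) powr (1/4) = (u powr 2) powr (1/4)" using u0 by (simp add: powr_numeral)
  also have "\<dots> = u powr (1/2)" by (simp add: powr_powr)
  also have "\<dots> = sqrt u" using u0 by (simp add: powr_half_sqrt)
  finally have "sqrt u = (u^2) powr (1/4)" ..
  also have "\<dots> \<le> (u^2 + v^2) powr (1/4)" by (rule powr_mono2) auto
  finally show ?thesis using u0 by (intro divide_left_mono mult_left_mono mult_pos_pos) auto
qed

lemma Vpot_far_ge:
  assumes u4: "4 \<le> u" and mu: "\<mu> \<le> 1 / (20 * sqrt u)" and v: "2 * sqrt u \<le> v^2"
  shows "1 / (sqrt 2 * sqrt u) + \<mu> \<le> v^2 / (2 * sqrt (u^2 + v^2))"
proof -
  define b t s where "b = sqrt u" and "t = v^2" and "s = sqrt (u^2 + v^2)"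
  have b2: "2 \<le> b" unfolding b_def using real_sqrt_le_mono[OF u4] by simp
  have bsq: "u = b^2" unfolding b_def using u4 by simp
  have t2b: "2 * b \<le> t" using v unfolding b_def t_def .
  have s0: "0 < s" unfolding s_def using u4 by (simp add: add_pos_nonneg)
  have ssq: "s^2 = b^4 + t" unfolding s_def t_def bsq by simp
  have "4/3 \<le> sqrt 2" by (rule real_le_rsqrt) (simp add: power2_eq_square)
  hence "1 / (sqrt 2 * b) \<le> 1 / ((4/3) * b)"
    using b2 by (intro divide_left_mono mult_right_mono mult_pos_pos) auto
  hence "1 / (sqrt 2 * b) + \<mu> \<le> 1 / ((4/3) * b) + 1 / (20 * b)"
    using mu unfolding b_def by (rule add_mono)
  also have "\<dots> = 4 / (5 * b)" using b2 by (simp add: field_simps)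
  finally have ab: "1 / (sqrt 2 * b) + \<mu> \<le> 4 / (5 * b)" .
  text \<open>The claim reduces to 8 s <= 5 b t; squared, this is the polynomial inequality
    below, which follows from t >= 2b and b >= 2.\<close>
  have key: "64 * (b^4 + t) \<le> 25 * (b^2 * t^2)"
  proof -
    have "(2 * b)^2 \<le> t^2" by (rule power_mono[OF t2b]) (use b2 in simp)
    hence "b^2 * (2 * b)^2 \<le> b^2 * t^2" by (rule mult_left_mono) simp
    hence "4 * b^4 \<le> b^2 * t^2" by (simp add: power_mult_distrib power4_eq_xxxx power2_eq_square)
    moreover have "16 * t \<le> b^2 * t^2"
      using b2 t2b mult_mono[OF mult_mono[OF b2 b2] mult_mono[OF b2 t2b]]
      by (simp add: power2_eq_square algebra_simps)
    moreover have "0 \<le> b^2 * t^2" by simp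
    ultimately show ?thesis unfolding distrib_left by linarith
  qed
  have "(8 * s)^2 = 64 * (b^4 + t)" unfolding ssq[symmetric] by algebra
  moreover have "(5 * b * t)^2 = 25 * (b^2 * t^2)" by algebra
  ultimately have "(8 * s)^2 \<le> (5 * b * t)^2" using key by linarith
  moreover have "0 \<le> 5 * b * t" using b2 t2b by simp
  ultimately have "8 * s \<le> 5 * b * t" by (rule power2_le_imp_le)
  hence "4 / (5 * b) \<le> t / (2 * s)" using s0 b2 by (simp add: field_simps)
  thus ?thesis using ab unfolding b_def t_def s_def by linarith
qed

text \<open>For u >= 4 and a shift 0 <= mu <= 1 / (20 sqrt u), the criterion applies with
  a = 1 / (sqrt 2 sqrt u) + mu and R = (2 sqrt u)^(1/2): then a R^2 = sqrt 2 + 2 sqrt u mu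
  <= sqrt 2 + 1/10 <= 2.\<close>
lemma Vpot_shift_at_most_one_neg_eig:
  assumes u4: "4 \<le> u" and mu0: "0 \<le> \<mu>" and mu: "\<mu> \<le> 1 / (20 * sqrt u)"
  shows "at_most_one_neg_eig (\<lambda>v. Vpot u v - \<mu>)"
proof (rule at_most_one_neg_eig_criterion)
  define a R where "a = 1 / (sqrt 2 * sqrt u) + \<mu>" and "R = sqrt (2 * sqrt u)"
  have u0: "0 < u" using u4 by simp
  have Rsq: "R^2 = 2 * sqrt u" unfolding R_def using u0 by simp
  show "continuous_on UNIV (\<lambda>v. Vpot u v - \<mu>)" unfolding Vpot_def
    by (intro continuous_intros) (use u0 in \<open>auto simp: add_pos_nonneg\<close>)
  show "-a \<le> Vpot u v - \<mu>" for v
  proof -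
    have "0 \<le> v^2 / (2 * sqrt (u^2 + v^2))" by simp
    thus ?thesis using Vpot_attractive_part_le[OF u0, of v] unfolding Vpot_def a_def by linarith
  qed
  show "0 \<le> Vpot u v - \<mu>" if "R \<le> \<bar>v\<bar>" for v
  proof -
    have "R^2 \<le> \<bar>v\<bar>^2" using that u0 by (intro power_mono) (auto simp: R_def)
    hence far: "2 * sqrt u \<le> v^2" using Rsq by simp
    show ?thesis using Vpot_far_ge[OF u4 mu far] Vpot_attractive_part_le[OF u0, of v]
      unfolding Vpot_def by linarith
  qed
  show "0 \<le> R" unfolding R_def using u0 by simp
  show "0 \<le> a" unfolding a_def using mu0 u0 by simp
  have "sqrt 2 \<le> 3/2" by (rule real_le_lsqrt) (simp_all add: power2_eq_square)
  moreover have "2 * sqrt u * \<mu> \<le> 1/10"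
    using mult_left_mono[OF mu, of "2 * sqrt u"] u0 by simp
  moreover have "a * R^2 = 2 / sqrt 2 + 2 * sqrt u * \<mu>"
    unfolding a_def Rsq using u0 by (simp add: field_simps)
  moreover have "2 / sqrt 2 = sqrt 2" by (rule real_div_sqrt) simp
  ultimately show "a * R^2 \<le> 2" by linarith
qed

lemma shift_small:
  assumes al: "\<alpha> \<ge> 2" and lam: "lam > 0" and uu: "u \<ge> 4 + 20 * lam"
  shows "lam * u powr (-1 - \<alpha>/2) \<le> 1 / (20 * sqrt u)"
proof -
  have u1: "1 \<le> u" using uu lam by simp
  have "lam * u powr (-1 - \<alpha>/2) \<le> (u / 20) * u powr (-2)"
    using uu lam u1 al by (intro mult_mono powr_mono) auto
  also have "\<dots> = 1 / (20 * u)" using u1 by (simp add: powr_minus power2_eq_square field_simps)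
  also have "\<dots> \<le> 1 / (20 * sqrt u)"
    using u1 by (intro divide_left_mono mult_left_mono real_le_lsqrt) (auto simp: power2_eq_square)
  finally show ?thesis .
qed

theorem mainTheorem5:
  fixes \<alpha> lam :: real
  assumes "\<alpha> \<ge> 2" and "lam > 0"
  shows "\<exists>u0>0. \<forall>u\<ge>u0.
           at_most_one_neg_eig (\<lambda>v. Vpot u v - lam * u powr (-1 - \<alpha>/2))"
proof (intro exI[of _ "4 + 20 * lam"] conjI allI impI)
  show "0 < 4 + 20 * lam" using assms by simp
  fix u assume u: "4 + 20 * lam \<le> u"
  show "at_most_one_neg_eig (\<lambda>v. Vpot u v - lam * u powr (-1 - \<alpha>/2))"
  proof (rule Vpot_shift_at_most_one_neg_eig)
    show "4 \<le> u" using u assms by simp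
    show "0 \<le> lam * u powr (-1 - \<alpha>/2)" using assms by simp
    show "lam * u powr (-1 - \<alpha>/2) \<le> 1 / (20 * sqrt u)" by (rule shift_small[OF assms u])
  qed
qed

end
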